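(* Consider a credit-attribution game with authors $N=\{1,\dots,n\}$ and papers $P_1,\dots,P_m$, and let $p=(p_1,\dots,p_n)\in[0,1]^n$. For every author $x$, the Shapley values of $x$ in the reliability extensions (with parameters $p$) of the full credit game $\Gamma_{FC}$ and of the full obligation game $\Gamma_{FO}$ are \[ Sh[\overline{v_{FC}}](x)=p_{x}\sum_{k\in Pap_{x}} w_{k}\Big[\sum_{S\subseteq Auth_{k}\setminus \{x\}}\frac{ \Pi_{\emptyset,S} }{(n_{k}-|S|)\binom{n_k}{|S|}} \Big], \qquad Sh[\overline{v_{FO}}](x)= \sum_{k\in Pap_{x}} \frac{w_{k}}{n_{k}}\, \Pi_{Auth_{k},Auth_{k}}, \] where $n_k=|Auth_k|$.
   Context: A credit-attribution game consists of a set of authors $N=\{1,\dots,n\}$ and papers $P_1,\dots,P_m$; each paper $P_k$ has a nonempty author set $Auth_k\subseteq N$ and a weight $w_k\in\mathbb{R}_+$. $Pap_x$ is the set of (indices of) papers having $x$ as an author. The full credit game has $v_{FC}(S)=\sum$ of $w_k$ over papers $k$ with $Auth_k\cap S\ne\emptyset$; the full obligation game has $v_{FO}(S)=\sum$ of $w_k$ over papers $k$ with $Auth_k\subseteq S$. For $T\subseteq S\subseteq N$, $\Pi_{T,S}=\prod_{i\in T}p_i\prod_{i\in S\setminus T}(1-p_i)$ (empty products equal $1$). The reliability extension of $(N,v)$ with parameters $p$ is $(N,\overline v)$ with $\overline v(S)=\sum_{T\subseteq S}v(T)\Pi_{T,S}$. The Shapley value is $Sh[v](x)=\frac1{n!}\sum_{\pi}[v(S^x_\pi\cup\{x\})-v(S^x_\pi)]$,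 the sum over all permutations $\pi$ of $N$, with $S^x_\pi$ the set of players preceding $x$ in $\pi$. *)

theory Defs
  imports Complex_Main
begin

text \<open>Authors are N = {1..n}; papers are indexed by k in {1..m};
  Auth k is the author set of paper k, w k its weight, p i the reliability of author i.\<close>

definition Pap :: "nat \<Rightarrow> (nat \<Rightarrow> nat set) \<Rightarrow> nat \<Rightarrow> nat set" where
  "Pap m Auth x = {k \<in> {1..m}. x \<in> Auth k}"

definition v_FC :: "nat \<Rightarrow> (nat \<Rightarrow> nat set) \<Rightarrow> (nat \<Rightarrow> real) \<Rightarrow> nat set \<Rightarrow> real" where
  "v_FC m Auth w S = (\<Sum>k\<in>{k \<in> {1..m}. Auth k \<inter> S \<noteq> {}}. w k)"

definition v_FO :: "nat \<Rightarrow> (nat \<Rightarrow> nat set) \<Rightarrow> (nat \<Rightarrow> real) \<Rightarrow> nat set \<Rightarrow> real" where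
  "v_FO m Auth w S = (\<Sum>k\<in>{k \<in> {1..m}. Auth k \<subseteq> S}. w k)"

definition PiTS :: "(nat \<Rightarrow> real) \<Rightarrow> nat set \<Rightarrow> nat set \<Rightarrow> real" where
  "PiTS p T S = (\<Prod>i\<in>T. p i) * (\<Prod>i\<in>S - T. 1 - p i)"

definition rel_ext :: "(nat \<Rightarrow> real) \<Rightarrow> (nat set \<Rightarrow> real) \<Rightarrow> nat set \<Rightarrow> real" where
  "rel_ext p v S = (\<Sum>T\<in>Pow S. v T * PiTS p T S)"

definition preds :: "nat list \<Rightarrow> nat \<Rightarrow> nat set" where
  "preds \<pi> x = set (takeWhile (\<lambda>y. y \<noteq> x) \<pi>)"

definition shapley :: "nat set \<Rightarrow> (nat set \<Rightarrow> real) \<Rightarrow> nat \<Rightarrow> real" where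
  "shapley N v x = (1 / fact (card N)) *
     (\<Sum>\<pi>\<in>{xs. distinct xs \<and> set xs = N}. v (preds \<pi> x \<union> {x}) - v (preds \<pi> x))"

end

theory Submission
  imports Defs "HOL-Combinatorics.Multiset_Permutations"
begin

(*
  Both games are sums over papers of indicator games, and the reliability extension is linear,
  so it suffices to compute it for one paper with author set A: the probability that some author
  of A in S is reliable is 1 - prod_{i in S cap A} (1 - p_i), and the probability that all
  authors of A are reliable (when A is a subset of S) is prod_{i in A} p_i. Hence the marginal
  contribution of x to S depends on S only through S cap A. In a uniformly random order of the
  players, the predecessors of x inside A are those in the induced random order of A, in which
  a given set R of r predecessors has probability r! (a-1-r)! / a!, that is
  1 / ((a - r) * binomial a r).
*)

lemma shapley_permutations_of_set:
  "shapley N v x = (\<Sum>\<pi>\<in>permutations_of_set N. v (preds \<pi> x \<union> {x}) - v (preds \<pi> x)) / fact (card N)"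
proof -
  have "{xs. distinct xs \<and> set xs = N} = permutations_of_set N"
    by (auto simp: permutations_of_set_def)
  then show ?thesis
    by (simp add: shapley_def)
qed

lemma preds_subset: "preds \<pi> x \<subseteq> set \<pi> - {x}"
  unfolding preds_def using set_takeWhileD by fastforce

lemma preds_Nil: "preds [] x = {}"
  by (simp add: preds_def)

lemma preds_Cons: "preds (y # \<pi>) x = (if y = x then {} else insert y (preds \<pi> x))"
  by (cases "y = x") (simp_all add: preds_def)

lemma preds_inter_filter:
  assumes "x \<in> A"
  shows "preds \<pi> x \<inter> A = preds (filter (\<lambda>y. y \<in> A) \<pi>) x"
  using assms by (induction \<pi>) (auto simp: preds_Nil preds_Cons)

lemma permutations_with_preds_eq:
  assumes "x \<in> A" "R \<subseteq> A - {x}"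
  shows "{\<sigma> \<in> permutations_of_set A. preds \<sigma> x = R}
       = (\<lambda>(r, s). r @ x # s) ` (permutations_of_set R \<times> permutations_of_set (A - R - {x}))"
proof (intro equalityI subsetI)
  fix \<sigma> assume "\<sigma> \<in> {\<sigma> \<in> permutations_of_set A. preds \<sigma> x = R}"
  then have \<sigma>: "set \<sigma> = A" "distinct \<sigma>" "set (takeWhile (\<lambda>y. y \<noteq> x) \<sigma>) = R"
    by (auto simp: permutations_of_set_def preds_def)
  define r where "r = takeWhile (\<lambda>y. y \<noteq> x) \<sigma>"
  define d where "d = dropWhile (\<lambda>y. y \<noteq> x) \<sigma>"
  have "d \<noteq> []"
    using \<sigma> assms unfolding d_def by (auto simp: dropWhile_eq_Nil_conv)
  moreover have "hd d = x"
    using calculation unfolding d_def using hd_dropWhile by blast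
  ultimately obtain t where "d = x # t"
    by (cases d) auto
  moreover have "\<sigma> = r @ d"
    unfolding r_def d_def by simp
  ultimately have split: "\<sigma> = r @ x # t"
    by simp
  have "set r = R"
    using \<sigma>(3) unfolding r_def .
  moreover have "distinct (r @ x # t)" "set (r @ x # t) = A"
    using \<sigma>(1,2) split by simp_all
  ultimately have perms: "r \<in> permutations_of_set R" "t \<in> permutations_of_set (A - R - {x})"
    unfolding permutations_of_set_def by auto
  show "\<sigma> \<in> (\<lambda>(r, s). r @ x # s) ` (permutations_of_set R \<times> permutations_of_set (A - R - {x}))"
    unfolding split by (rule image_eqI[where x = "(r, t)"]) (simp_all add: perms)
next
  fix \<sigma> assume "\<sigma> \<in> (\<lambda>(r, s). r @ x # s) ` (permutations_of_set R \<times> permutations_of_set (A - R - {x}))"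
  then obtain r s where \<sigma>: "\<sigma> = r @ x # s"
    and r: "set r = R" "distinct r" and s: "set s = A - R - {x}" "distinct s"
    by (auto simp: permutations_of_set_def)
  have "x \<notin> set r"
    using r assms by auto
  then have "takeWhile (\<lambda>y. y \<noteq> x) \<sigma> = r"
    unfolding \<sigma> by (subst takeWhile_append2) auto
  then show "\<sigma> \<in> {\<sigma> \<in> permutations_of_set A. preds \<sigma> x = R}"
    using \<sigma> r s assms \<open>x \<notin> set r\<close> by (auto simp: permutations_of_set_def preds_def)
qed

lemma card_permutations_with_preds:
  assumes "finite A" "x \<in> A" "R \<subseteq> A - {x}"
  shows "card {\<sigma> \<in> permutations_of_set A. preds \<sigma> x = R} = fact (card R) * fact (card A - 1 - card R)"
proof -
  have "inj_on (\<lambda>(r, s). r @ x # s) (permutations_of_set R \<times> permutations_of_set (A - R - {x}))"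
  proof (rule inj_onI, clarify)
    fix r s r' s'
    assume "r \<in> permutations_of_set R" "s \<in> permutations_of_set (A - R - {x})"
      and "r @ x # s = r' @ x # s'"
    moreover have "x \<notin> set r" "x \<notin> set s"
      using calculation(1,2) assms(3) by (auto simp: permutations_of_set_def)
    ultimately show "r = r' \<and> s = s'"
      by (metis append_Cons_eq_iff)
  qed
  moreover have "A - R - {x} = (A - {x}) - R"
    by auto
  moreover have "finite R"
    using assms finite_subset by blast
  ultimately show ?thesis
    using assms by (simp add: permutations_with_preds_eq card_image card_cartesian_product card_Diff_subset)
qed

lemma sum_permutations_preds:
  fixes F :: "nat set \<Rightarrow> 'a :: comm_semiring_1"
  assumes "finite A" "x \<in> A"
  shows "(\<Sum>\<sigma>\<in>permutations_of_set A. F (preds \<sigma> x))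
       = (\<Sum>R\<in>Pow (A - {x}). F R * of_nat (fact (card R) * fact (card A - 1 - card R)))"
proof -
  have "(\<lambda>\<sigma>. preds \<sigma> x) ` permutations_of_set A \<subseteq> Pow (A - {x})"
    using preds_subset by (fastforce simp: permutations_of_set_def)
  then have "(\<Sum>\<sigma>\<in>permutations_of_set A. F (preds \<sigma> x))
      = (\<Sum>R\<in>Pow (A - {x}). \<Sum>\<sigma>\<in>{\<sigma> \<in> permutations_of_set A. preds \<sigma> x = R}. F R)"
    by (subst sum.group[symmetric]) (use assms in \<open>auto intro!: sum.cong\<close>)
  also have "\<dots> = (\<Sum>R\<in>Pow (A - {x}). F R * of_nat (fact (card R) * fact (card A - 1 - card R)))"
    using assms by (intro sum.cong) (auto simp: card_permutations_with_preds mult.commute)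
  finally show ?thesis .
qed

lemma sum_permutations_of_set_Cons:
  assumes "finite A" "A \<noteq> {}"
  shows "sum H (permutations_of_set A) = (\<Sum>y\<in>A. \<Sum>\<pi>\<in>permutations_of_set (A - {y}). H (y # \<pi>))"
proof -
  have "sum H (permutations_of_set A) = (\<Sum>y\<in>A. sum H ((#) y ` permutations_of_set (A - {y})))"
    unfolding permutations_of_set_nonempty[OF assms(2)]
    by (rule sum.UNION_disjoint) (use assms in auto)
  also have "\<dots> = (\<Sum>y\<in>A. \<Sum>\<pi>\<in>permutations_of_set (A - {y}). H (y # \<pi>))"
    by (rule sum.cong[OF refl], subst sum.reindex) (auto simp: inj_on_def)
  finally show ?thesis .
qed

lemma sum_permutations_of_set_filter_Cons:
  fixes G :: "'a list \<Rightarrow> 'b :: comm_monoid_add"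
  assumes "finite N" "N \<noteq> {}" "A \<subseteq> N"
  shows "(\<Sum>\<pi>\<in>permutations_of_set N. G (filter (\<lambda>z. z \<in> A) \<pi>))
       = (\<Sum>y\<in>N - A. \<Sum>\<pi>\<in>permutations_of_set (N - {y}). G (filter (\<lambda>z. z \<in> A) \<pi>))
       + (\<Sum>y\<in>A. \<Sum>\<pi>\<in>permutations_of_set (N - {y}). G (y # filter (\<lambda>z. z \<in> A - {y}) \<pi>))"
proof -
  have filter_drop: "filter (\<lambda>z. z \<in> A) \<pi> = filter (\<lambda>z. z \<in> A - {y}) \<pi>"
    if "\<pi> \<in> permutations_of_set (N - {y})" for \<pi> y
    using that by (auto simp: permutations_of_set_def intro!: filter_cong)
  have "(\<Sum>\<pi>\<in>permutations_of_set N. G (filter (\<lambda>z. z \<in> A) \<pi>))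
      = (\<Sum>y\<in>N - A. \<Sum>\<pi>\<in>permutations_of_set (N - {y}). G (filter (\<lambda>z. z \<in> A) (y # \<pi>)))
      + (\<Sum>y\<in>A. \<Sum>\<pi>\<in>permutations_of_set (N - {y}). G (filter (\<lambda>z. z \<in> A) (y # \<pi>)))"
    unfolding sum_permutations_of_set_Cons[OF assms(1,2)]
    using assms by (intro sum.subset_diff)
  also have "\<dots> = (\<Sum>y\<in>N - A. \<Sum>\<pi>\<in>permutations_of_set (N - {y}). G (filter (\<lambda>z. z \<in> A) \<pi>))
      + (\<Sum>y\<in>A. \<Sum>\<pi>\<in>permutations_of_set (N - {y}). G (y # filter (\<lambda>z. z \<in> A - {y}) \<pi>))"
    using filter_drop by (intro arg_cong2[where f = "(+)"] sum.cong) auto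
  finally show ?thesis .
qed

lemma sum_permutations_of_set_filter:
  fixes G :: "'a list \<Rightarrow> real"
  assumes "finite N" "A \<subseteq> N"
  shows "fact (card A) * (\<Sum>\<pi>\<in>permutations_of_set N. G (filter (\<lambda>y. y \<in> A) \<pi>))
       = fact (card N) * (\<Sum>\<sigma>\<in>permutations_of_set A. G \<sigma>)"
  using assms
proof (induction "card N" arbitrary: N A G)
  case 0
  then show ?case by auto
next
  case (Suc k)
  have "finite A" "N \<noteq> {}"
    using Suc finite_subset by auto
  have IH: "fact (card A') * (\<Sum>\<pi>\<in>permutations_of_set (N - {y}). G' (filter (\<lambda>z. z \<in> A') \<pi>))
      = fact k * (\<Sum>\<sigma>\<in>permutations_of_set A'. G' \<sigma>)"
    if "y \<in> N" "A' \<subseteq> N - {y}" for y A' and G' :: "'a list \<Rightarrow> real"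
    using Suc.hyps(1)[of "N - {y}" A' G'] Suc.hyps(2)[symmetric] that Suc.prems(1) by simp
  define S where "S = (\<Sum>\<sigma>\<in>permutations_of_set A. G \<sigma>)"
  define S' where "S' = (\<Sum>y\<in>A. \<Sum>\<sigma>\<in>permutations_of_set (A - {y}). G (y # \<sigma>))"
  have outside: "fact (card A) * (\<Sum>\<pi>\<in>permutations_of_set (N - {y}). G (filter (\<lambda>z. z \<in> A) \<pi>))
      = fact k * S" if "y \<in> N - A" for y
    using IH[of y A G] Suc.prems(2) that unfolding S_def by auto
  have inside: "fact (card A) * (\<Sum>\<pi>\<in>permutations_of_set (N - {y}). G (y # filter (\<lambda>z. z \<in> A - {y}) \<pi>))
      = real (card A) * fact k * (\<Sum>\<sigma>\<in>permutations_of_set (A - {y}). G (y # \<sigma>))" if "y \<in> A" for y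
  proof -
    have "fact (card A) = real (card A) * fact (card (A - {y}))"
      using \<open>finite A\<close> that by (subst fact_reduce) (auto simp: card_gt_0_iff)
    then show ?thesis
      using IH[of y "A - {y}" "\<lambda>\<sigma>. G (y # \<sigma>)"] Suc.prems(2) that by auto
  qed
  have "fact (card A) * (\<Sum>\<pi>\<in>permutations_of_set N. G (filter (\<lambda>y. y \<in> A) \<pi>))
      = (\<Sum>y\<in>N - A. fact (card A) * (\<Sum>\<pi>\<in>permutations_of_set (N - {y}). G (filter (\<lambda>z. z \<in> A) \<pi>)))
      + (\<Sum>y\<in>A. fact (card A) *
          (\<Sum>\<pi>\<in>permutations_of_set (N - {y}). G (y # filter (\<lambda>z. z \<in> A - {y}) \<pi>)))"
    by (simp add: sum_permutations_of_set_filter_Cons[OF Suc.prems(1) \<open>N \<noteq> {}\<close> Suc.prems(2)]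
        distrib_left sum_distrib_left)
  also have "\<dots> = (\<Sum>y\<in>N - A. fact k * S)
      + (\<Sum>y\<in>A. real (card A) * fact k * (\<Sum>\<sigma>\<in>permutations_of_set (A - {y}). G (y # \<sigma>)))"
    using outside inside by (intro arg_cong2[where f = "(+)"] sum.cong) auto
  also have "\<dots> = (real (card N - card A) * fact k + real (card A) * fact k) * S"
  proof -
    \<comment> \<open>The factor card A makes the case A = {} harmless.\<close>
    have "real (card A) * S' = real (card A) * S"
      unfolding S_def S'_def
      by (cases "A = {}") (simp_all add: sum_permutations_of_set_Cons[OF \<open>finite A\<close>])
    then show ?thesis
      using Suc.prems \<open>finite A\<close> unfolding S'_def
      by (simp add: card_Diff_subset sum_distrib_left[symmetric] algebra_simps)
  qed
  also have "\<dots> = fact (card N) * S"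
    using Suc.hyps(2)[symmetric] Suc.prems card_mono[OF Suc.prems] by (simp add: algebra_simps)
  finally show ?case
    unfolding S_def .
qed

lemma fact_mult_fact_div_fact:
  assumes "r < a"
  shows "fact r * fact (a - 1 - r) / fact a = 1 / (real (a - r) * real (a choose r))"
proof -
  obtain d where d: "a = Suc (r + d)"
    using assms less_imp_Suc_add by blast
  have "fact r * fact (Suc d) * (a choose r) = fact a"
    using binomial_fact_lemma[of r a] d by simp
  then have "real (fact r * fact (Suc d) * (a choose r)) = fact a"
    by (simp only: of_nat_fact)
  then have "(fact a :: real) = fact r * fact d * (real (Suc d) * real (a choose r))"
    by (simp add: fact_Suc algebra_simps)
  then show ?thesis
    using d by simp
qed

lemma sum_permutations_preds_inter:
  fixes F :: "nat set \<Rightarrow> real"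
  assumes "finite N" "A \<subseteq> N" "x \<in> A"
  shows "(\<Sum>\<pi>\<in>permutations_of_set N. F (preds \<pi> x \<inter> A)) / fact (card N)
       = (\<Sum>R\<in>Pow (A - {x}). F R / (real (card A - card R) * real (card A choose card R)))"
proof -
  have "finite A"
    using assms finite_subset by blast
  have "(\<Sum>\<pi>\<in>permutations_of_set N. F (preds \<pi> x \<inter> A))
      = (\<Sum>\<pi>\<in>permutations_of_set N. F (preds (filter (\<lambda>y. y \<in> A) \<pi>) x))"
    using preds_inter_filter[OF assms(3)] by simp
  also have "\<dots> = fact (card N) / fact (card A) * (\<Sum>\<sigma>\<in>permutations_of_set A. F (preds \<sigma> x))"
    using sum_permutations_of_set_filter[OF assms(1,2)] by (simp add: field_simps)
  finally have "(\<Sum>\<pi>\<in>permutations_of_set N. F (preds \<pi> x \<inter> A)) / fact (card N)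
      = (\<Sum>R\<in>Pow (A - {x}). F R * (fact (card R) * fact (card A - 1 - card R) / fact (card A)))"
    by (simp add: sum_permutations_preds[OF \<open>finite A\<close> assms(3)] sum_divide_distrib)
  also have "\<dots> = (\<Sum>R\<in>Pow (A - {x}). F R / (real (card A - card R) * real (card A choose card R)))"
  proof (rule sum.cong[OF refl])
    fix R assume "R \<in> Pow (A - {x})"
    then have "card R < card A"
      using \<open>finite A\<close> assms(3) by (auto intro: psubset_card_mono)
    then show "F R * (fact (card R) * fact (card A - 1 - card R) / fact (card A))
        = F R / (real (card A - card R) * real (card A choose card R))"
      unfolding fact_mult_fact_div_fact[OF \<open>card R < card A\<close>] by simp
  qed
  finally show ?thesis .
qed

lemma shapley_of_local_marginals:
  fixes c :: "'k \<Rightarrow> real" and F :: "'k \<Rightarrow> nat set \<Rightarrow> real"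
  assumes "finite N" and A: "\<And>k. k \<in> K \<Longrightarrow> A k \<subseteq> N \<and> x \<in> A k"
    and marginal: "\<And>S. S \<subseteq> N - {x} \<Longrightarrow> v (S \<union> {x}) - v S = (\<Sum>k\<in>K. c k * F k (S \<inter> A k))"
  shows "shapley N v x = (\<Sum>k\<in>K. c k *
           (\<Sum>R\<in>Pow (A k - {x}). F k R / (real (card (A k) - card R) * real (card (A k) choose card R))))"
proof -
  have "shapley N v x
      = (\<Sum>\<pi>\<in>permutations_of_set N. \<Sum>k\<in>K. c k * F k (preds \<pi> x \<inter> A k)) / fact (card N)"
    unfolding shapley_permutations_of_set using preds_subset
    by (intro arg_cong2[where f = "(/)"] sum.cong refl marginal) (auto simp: permutations_of_set_def)
  also have "\<dots> = (\<Sum>k\<in>K. c k * ((\<Sum>\<pi>\<in>permutations_of_set N. F k (preds \<pi> x \<inter> A k)) / fact (card N)))"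
    by (subst sum.swap) (simp add: sum_divide_distrib sum_distrib_left)
  also have "\<dots> = (\<Sum>k\<in>K. c k *
           (\<Sum>R\<in>Pow (A k - {x}). F k R / (real (card (A k) - card R) * real (card (A k) choose card R))))"
    using A by (simp add: sum_permutations_preds_inter[OF \<open>finite N\<close>])
  finally show ?thesis .
qed

lemma sum_PiTS_between:
  assumes "finite S" "B \<subseteq> S" "B \<inter> C = {}"
  shows "(\<Sum>T\<in>Pow S. if B \<subseteq> T \<and> T \<inter> C = {} then PiTS p T S else 0)
       = (\<Prod>i\<in>B. p i) * (\<Prod>i\<in>S \<inter> C. 1 - p i)"
proof -
  \<comment> \<open>The indicator is absorbed into the weights (f vanishes on C, g on B), so the sum is the
    expansion of a product over S.\<close>
  define f where "f i = (if i \<in> C then 0 else p i)" for i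
  define g where "g i = (if i \<in> B then 0 else 1 - p i)" for i
  have summand: "(if B \<subseteq> T \<and> T \<inter> C = {} then PiTS p T S else 0) = (\<Prod>i\<in>T. f i) * (\<Prod>i\<in>S - T. g i)"
    if "T \<subseteq> S" for T
  proof -
    have "finite T"
      using that assms(1) finite_subset by blast
    show ?thesis
    proof (cases "B \<subseteq> T \<and> T \<inter> C = {}")
      case True
      then show ?thesis
        unfolding PiTS_def f_def g_def by (auto intro!: arg_cong2[where f = "(*)"] prod.cong)
    next
      case False
      then have "(\<exists>i\<in>T. f i = 0) \<or> (\<exists>i\<in>S - T. g i = 0)"
        using assms(2) unfolding f_def g_def by auto
      then show ?thesis
        using False \<open>finite T\<close> assms(1) by (auto simp: prod_zero)
    qed
  qed
  have "(\<Sum>T\<in>Pow S. if B \<subseteq> T \<and> T \<inter> C = {} then PiTS p T S else 0) = (\<Prod>i\<in>S. f i + g i)"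
    using summand by (simp add: prod_add[OF assms(1)])
  also have "\<dots> = (\<Prod>i\<in>S \<inter> B. f i + g i) * (\<Prod>i\<in>S - B. f i + g i)"
    using assms(1) by (rule prod.Int_Diff)
  also have "\<dots> = (\<Prod>i\<in>B. p i) * (\<Prod>i\<in>S - B. if i \<in> C then 1 - p i else 1)"
    using assms(2,3) unfolding f_def g_def by (intro arg_cong2[where f = "(*)"] prod.cong) auto
  also have "\<dots> = (\<Prod>i\<in>B. p i) * (\<Prod>i\<in>(S - B) \<inter> C. 1 - p i)"
    using assms(1) by (simp add: prod.inter_restrict)
  also have "(S - B) \<inter> C = S \<inter> C"
    using assms(3) by auto
  finally show ?thesis .
qed

lemma rel_ext_intersecting_indicator:
  assumes "finite S"
  shows "rel_ext p (\<lambda>T. if A \<inter> T \<noteq> {} then 1 else 0) S = 1 - (\<Prod>i\<in>S \<inter> A. 1 - p i)"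
proof -
  have "rel_ext p (\<lambda>T. if A \<inter> T \<noteq> {} then 1 else 0) S
      = (\<Sum>T\<in>Pow S. PiTS p T S) - (\<Sum>T\<in>Pow S. if {} \<subseteq> T \<and> T \<inter> A = {} then PiTS p T S else 0)"
    unfolding rel_ext_def sum_subtractf[symmetric] by (intro sum.cong) auto
  also have "\<dots> = 1 - (\<Prod>i\<in>S \<inter> A. 1 - p i)"
    using sum_PiTS_between[OF assms, of "{}" "{}" p] sum_PiTS_between[OF assms, of "{}" A p] by simp
  finally show ?thesis .
qed

lemma rel_ext_containing_indicator:
  assumes "finite S"
  shows "rel_ext p (\<lambda>T. if A \<subseteq> T then 1 else 0) S = (if A \<subseteq> S then \<Prod>i\<in>A. p i else 0)"
proof (cases "A \<subseteq> S")
  case True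
  have "rel_ext p (\<lambda>T. if A \<subseteq> T then 1 else 0) S
      = (\<Sum>T\<in>Pow S. if A \<subseteq> T \<and> T \<inter> {} = {} then PiTS p T S else 0)"
    unfolding rel_ext_def by (intro sum.cong) auto
  then show ?thesis
    using sum_PiTS_between[OF assms True, of "{}" p] True by simp
next
  case False
  then show ?thesis
    unfolding rel_ext_def by (intro trans[OF sum.neutral]) auto
qed

lemma rel_ext_sum:
  "rel_ext p (\<lambda>T. \<Sum>k\<in>K. c k * g k T) S = (\<Sum>k\<in>K. c k * rel_ext p (g k) S)"
  unfolding rel_ext_def by (simp add: sum_distrib_left sum_distrib_right mult.assoc) (rule sum.swap)

lemma sum_Pap:
  "(\<Sum>k\<in>{1..m}. if x \<in> Auth k then g k else 0) = (\<Sum>k\<in>Pap m Auth x. g k)"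
  unfolding Pap_def by (rule sum.inter_filter[symmetric]) simp

lemma v_FC_eq_sum: "v_FC m Auth w T = (\<Sum>k\<in>{1..m}. w k * (if Auth k \<inter> T \<noteq> {} then 1 else 0))"
  unfolding v_FC_def sum.inter_filter[OF finite_atLeastAtMost] by (intro sum.cong) auto

lemma v_FO_eq_sum: "v_FO m Auth w T = (\<Sum>k\<in>{1..m}. w k * (if Auth k \<subseteq> T then 1 else 0))"
  unfolding v_FO_def sum.inter_filter[OF finite_atLeastAtMost] by (intro sum.cong) auto

lemma rel_ext_v_FC_marginal:
  assumes "finite S" "x \<notin> S"
  shows "rel_ext p (v_FC m Auth w) (S \<union> {x}) - rel_ext p (v_FC m Auth w) S
       = (\<Sum>k\<in>Pap m Auth x. w k * p x * (\<Prod>i\<in>S \<inter> Auth k. 1 - p i))"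
proof -
  have per_paper: "c * (1 - (\<Prod>i\<in>(S \<union> {x}) \<inter> A. 1 - p i)) - c * (1 - (\<Prod>i\<in>S \<inter> A. 1 - p i))
      = (if x \<in> A then c * p x * (\<Prod>i\<in>S \<inter> A. 1 - p i) else 0)" for c A
  proof (cases "x \<in> A")
    case True
    then have "(S \<union> {x}) \<inter> A = insert x (S \<inter> A)"
      by auto
    then show ?thesis
      using True assms by (simp add: algebra_simps)
  qed (simp add: Int_insert_left)
  have "rel_ext p (v_FC m Auth w) (S \<union> {x}) - rel_ext p (v_FC m Auth w) S
      = (\<Sum>k\<in>{1..m}. w k * (1 - (\<Prod>i\<in>(S \<union> {x}) \<inter> Auth k. 1 - p i))
          - w k * (1 - (\<Prod>i\<in>S \<inter> Auth k. 1 - p i)))"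
    using assms unfolding v_FC_eq_sum[abs_def] rel_ext_sum sum_subtractf
    by (simp add: rel_ext_intersecting_indicator del: Un_insert_right)
  also have "\<dots> = (\<Sum>k\<in>Pap m Auth x. w k * p x * (\<Prod>i\<in>S \<inter> Auth k. 1 - p i))"
    unfolding per_paper by (rule sum_Pap)
  finally show ?thesis .
qed

lemma rel_ext_v_FO_marginal:
  assumes "finite S" "x \<notin> S"
  shows "rel_ext p (v_FO m Auth w) (S \<union> {x}) - rel_ext p (v_FO m Auth w) S
       = (\<Sum>k\<in>Pap m Auth x. w k * (\<Prod>i\<in>Auth k. p i) * (if S \<inter> Auth k = Auth k - {x} then 1 else 0))"
proof -
  have per_paper: "c * (if A \<subseteq> S \<union> {x} then q else 0) - c * (if A \<subseteq> S then q else 0)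
      = (if x \<in> A then c * q * (if S \<inter> A = A - {x} then 1 else 0) else 0)" for c q :: real and A
    using assms(2) by auto
  have "rel_ext p (v_FO m Auth w) (S \<union> {x}) - rel_ext p (v_FO m Auth w) S
      = (\<Sum>k\<in>{1..m}. w k * (if Auth k \<subseteq> S \<union> {x} then \<Prod>i\<in>Auth k. p i else 0)
          - w k * (if Auth k \<subseteq> S then \<Prod>i\<in>Auth k. p i else 0))"
    using assms unfolding v_FO_eq_sum[abs_def] rel_ext_sum sum_subtractf
    by (simp add: rel_ext_containing_indicator del: Un_insert_right)
  also have "\<dots> = (\<Sum>k\<in>Pap m Auth x. w k * (\<Prod>i\<in>Auth k. p i) * (if S \<inter> Auth k = Auth k - {x} then 1 else 0))"
    unfolding per_paper by (rule sum_Pap)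
  finally show ?thesis .
qed

lemma sum_Pow_top_weight:
  assumes "finite A" "x \<in> A"
  shows "(\<Sum>R\<in>Pow (A - {x}). (if R = A - {x} then 1 else 0) / (real (card A - card R) * real (card A choose card R)))
       = 1 / real (card A)"
proof -
  obtain a where a: "card A = Suc a"
    using assms by (metis card_gt_0_iff emptyE gr0_implies_Suc)
  then have "card (A - {x}) = a"
    using assms by simp
  then show ?thesis
    using assms(1) a by (simp add: if_distrib[where f = "\<lambda>z. z / _"] cong: if_cong)
qed

lemma shapley_rel_ext_v_FC:
  assumes "finite N" and authors: "\<And>k. k \<in> Pap m Auth x \<Longrightarrow> Auth k \<subseteq> N"
  shows "shapley N (rel_ext p (v_FC m Auth w)) x =
           p x * (\<Sum>k\<in>Pap m Auth x. w k *
              (\<Sum>S\<in>Pow (Auth k - {x}).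
                 PiTS p {} S / (real (card (Auth k) - card S) * real (card (Auth k) choose card S))))"
proof -
  have "shapley N (rel_ext p (v_FC m Auth w)) x = (\<Sum>k\<in>Pap m Auth x. (w k * p x) *
      (\<Sum>R\<in>Pow (Auth k - {x}). (\<Prod>i\<in>R. 1 - p i)
        / (real (card (Auth k) - card R) * real (card (Auth k) choose card R))))"
  proof (rule shapley_of_local_marginals[OF assms(1)])
    show "Auth k \<subseteq> N \<and> x \<in> Auth k" if "k \<in> Pap m Auth x" for k
      using that authors unfolding Pap_def by auto
    show "rel_ext p (v_FC m Auth w) (S \<union> {x}) - rel_ext p (v_FC m Auth w) S
        = (\<Sum>k\<in>Pap m Auth x. (w k * p x) * (\<Prod>i\<in>S \<inter> Auth k. 1 - p i))"
      if "S \<subseteq> N - {x}" for S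
    proof -
      have "finite S" "x \<notin> S"
        using that assms(1) finite_subset by auto
      show ?thesis
        unfolding rel_ext_v_FC_marginal[OF \<open>finite S\<close> \<open>x \<notin> S\<close>] by (simp only: mult.assoc)
    qed
  qed
  then show ?thesis
    by (simp add: PiTS_def sum_distrib_left mult_ac)
qed

lemma shapley_rel_ext_v_FO:
  assumes "finite N" and authors: "\<And>k. k \<in> Pap m Auth x \<Longrightarrow> Auth k \<subseteq> N"
  shows "shapley N (rel_ext p (v_FO m Auth w)) x =
           (\<Sum>k\<in>Pap m Auth x. w k / real (card (Auth k)) * PiTS p (Auth k) (Auth k))"
proof -
  have papers: "Auth k \<subseteq> N \<and> x \<in> Auth k" if "k \<in> Pap m Auth x" for k
    using that authors unfolding Pap_def by auto
  have "shapley N (rel_ext p (v_FO m Auth w)) x = (\<Sum>k\<in>Pap m Auth x. (w k * (\<Prod>i\<in>Auth k. p i)) *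
      (\<Sum>R\<in>Pow (Auth k - {x}). (if R = Auth k - {x} then 1 else 0)
        / (real (card (Auth k) - card R) * real (card (Auth k) choose card R))))"
  proof (rule shapley_of_local_marginals[OF assms(1) papers])
    show "rel_ext p (v_FO m Auth w) (S \<union> {x}) - rel_ext p (v_FO m Auth w) S
        = (\<Sum>k\<in>Pap m Auth x. (w k * (\<Prod>i\<in>Auth k. p i)) * (if S \<inter> Auth k = Auth k - {x} then 1 else 0))"
      if "S \<subseteq> N - {x}" for S
    proof -
      have "finite S" "x \<notin> S"
        using that assms(1) finite_subset by auto
      then show ?thesis
        by (rule rel_ext_v_FO_marginal)
    qed
  qed
  also have "\<dots> = (\<Sum>k\<in>Pap m Auth x. w k / real (card (Auth k)) * PiTS p (Auth k) (Auth k))"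
  proof (rule sum.cong[OF refl])
    fix k assume "k \<in> Pap m Auth x"
    then have "finite (Auth k)" "x \<in> Auth k"
      using papers assms(1) finite_subset by blast+
    then show "w k * (\<Prod>i\<in>Auth k. p i) * (\<Sum>R\<in>Pow (Auth k - {x}). (if R = Auth k - {x} then 1 else 0)
        / (real (card (Auth k) - card R) * real (card (Auth k) choose card R)))
      = w k / real (card (Auth k)) * PiTS p (Auth k) (Auth k)"
      by (simp add: sum_Pow_top_weight PiTS_def)
  qed
  finally show ?thesis .
qed

theorem theorem2:
  fixes n m :: nat and Auth :: "nat \<Rightarrow> nat set" and w :: "nat \<Rightarrow> real" and p :: "nat \<Rightarrow> real"
    and x :: nat
  assumes auth_ne: "\<And>k. k \<in> {1..m} \<Longrightarrow> Auth k \<noteq> {}"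
    and auth_sub: "\<And>k. k \<in> {1..m} \<Longrightarrow> Auth k \<subseteq> {1..n}"
    and w_nonneg: "\<And>k. k \<in> {1..m} \<Longrightarrow> w k \<ge> 0"
    and p_range: "\<And>i. i \<in> {1..n} \<Longrightarrow> 0 \<le> p i \<and> p i \<le> 1"
    and x_in: "x \<in> {1..n}"
  shows "(shapley {1..n} (rel_ext p (v_FC m Auth w)) x =
           p x * (\<Sum>k\<in>Pap m Auth x. w k *
              (\<Sum>S\<in>Pow (Auth k - {x}).
                 PiTS p {} S / (real (card (Auth k) - card S) * real (card (Auth k) choose card S))))) \<and>
         (shapley {1..n} (rel_ext p (v_FO m Auth w)) x =
           (\<Sum>k\<in>Pap m Auth x. w k / real (card (Auth k)) * PiTS p (Auth k) (Auth k)))"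
proof -
  have authors: "Auth k \<subseteq> {1..n}" if "k \<in> Pap m Auth x" for k
    using that auth_sub unfolding Pap_def by auto
  show ?thesis
    by (intro conjI shapley_rel_ext_v_FC shapley_rel_ext_v_FO finite_atLeastAtMost) (erule authors)+
qed

end
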